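(* Let $A\in\mathbb{R}^{n\times n}$, $B\in\mathbb{R}^{n\times m}$, $\mathcal{A}\in\{0,*\}^{n\times n}$, $\mathcal{B}\in\{0,*\}^{n\times m}$, and let $\lambda_i\in\sigma(A)$. Then $$\max_{\Delta A\in[\mathcal{A}],\,\Delta B\in[\mathcal{B}]}\operatorname{rank}[\lambda_i I-A-\Delta A,\;B+\Delta B]=n$$ if and only if there exist $J_i^R\subseteq[n]$, $J_i^C\subseteq[n+m]$ with $|J_i^R|=|J_i^C|$, and $\bar J_i^R\subseteq[n]\setminus J_i^R$, $\bar J_i^C\subseteq[n+m]\setminus J_i^C$ with $|\bar J_i^R|=|\bar J_i^C|=n-|J_i^C|$, such that the square submatrix $[\lambda_iI-A,\ B]_{J_i^R,J_i^C}$ is nonsingular and the square pattern submatrix $[\mathcal{A},\mathcal{B}]_{\bar J_i^R,\bar J_i^C}$ has full generic rank.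
   Context: For $\mathcal{M}\in\{0,*\}^{n_1\times n_2}$, $[\mathcal{M}]=\{M\in\mathbb{R}^{n_1\times n_2}: M_{ij}=0 \text{ whenever } \mathcal{M}_{ij}=0\}$; the generic rank of $\mathcal{M}$ is the maximum rank of an element of $[\mathcal{M}]$. $M_{S_1,S_2}$ denotes the submatrix with rows indexed by $S_1$ and columns by $S_2$; $[n]=\{1,\dots,n\}$. $\sigma(A)$ is the set of complex eigenvalues of $A$; ranks are over $\mathbb{C}$. *)

theory Defs
  imports "Jordan_Normal_Form.DL_Rank_Submatrix" "Jordan_Normal_Form.Char_Poly"
begin

definition mrank :: "'a::field mat \<Rightarrow> nat" where
  "mrank M = vec_space.rank (dim_row M) M"

definition hcat :: "'a mat \<Rightarrow> 'a mat \<Rightarrow> 'a mat" where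
  "hcat X Y = mat (dim_row X) (dim_col X + dim_col Y)
     (\<lambda>(i,j). if j < dim_col X then X $$ (i,j) else Y $$ (i, j - dim_col X))"

text \<open>Zero/nonzero patterns: a bool matrix, True meaning a free entry (*), False a fixed zero.
  realizations P is the set [P] of real matrices with the pattern's zeros.\<close>
definition realizations :: "bool mat \<Rightarrow> real mat set" where
  "realizations P = {M. M \<in> carrier_mat (dim_row P) (dim_col P) \<and>
      (\<forall>i<dim_row P. \<forall>j<dim_col P. \<not> P $$ (i,j) \<longrightarrow> M $$ (i,j) = 0)}"

definition generic_rank :: "bool mat \<Rightarrow> nat" where
  "generic_rank P = Max {mrank (map_mat complex_of_real M) | M. M \<in> realizations P}"

end

theory Submission
  imports Defs
begin

text \<open>
  Write \<open>F = [\<lambda>I - A, B]\<close> and \<open>D = [-\<Delta>A, \<Delta>B]\<close>, so that the perturbed matrix is \<open>F + D\<close> and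
  \<open>D\<close> ranges over the real realizations of the pattern \<open>[\<A>, \<B>]\<close>. If \<open>F + D\<close> has full row
  rank, some \<open>n\<close> columns give a nonsingular square block; expanding its determinant
  multilinearly, first in the rows and then in the columns, yields a nonzero term that is block
  diagonal, i.e. complementary blocks on which \<open>F\<close> and \<open>D\<close> are both nonsingular. The block of
  \<open>D\<close> is a nonsingular realization of the corresponding pattern block, which therefore has full
  generic rank. Conversely, realize the pattern block nonsingularly by a matrix \<open>E\<close> supported on
  it. Taking the rows of that block from \<open>E\<close> and all other rows from \<open>F\<close> gives a block
  triangular, hence nonsingular, matrix; the determinant along the line through it in direction
  \<open>F\<close> is a nonzero polynomial, and rescaling rows turns a non-root \<open>s \<noteq> 0\<close> into a
  perturbation \<open>F + (1/s) E\<close> of full rank.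
\<close>

section \<open>Blocks with trivial kernel\<close>

text \<open>Blocks are read off entry functions rather than matrices, so that they can be indexed by
  arbitrary finite sets of row and column numbers.\<close>

definition block_inj :: "(nat \<Rightarrow> nat \<Rightarrow> 'a::field) \<Rightarrow> nat set \<Rightarrow> nat set \<Rightarrow> bool" where
  "block_inj X R S \<longleftrightarrow> (\<forall>v. (\<forall>i\<in>R. (\<Sum>j\<in>S. X i j * v j) = 0) \<longrightarrow> (\<forall>j\<in>S. v j = 0))"

lemma block_injD:
  assumes "block_inj X R S" "\<And>i. i \<in> R \<Longrightarrow> (\<Sum>j\<in>S. X i j * v j) = 0" "j \<in> S"
  shows "v j = 0"
  using assms unfolding block_inj_def by blast

lemma block_inj_cong:
  assumes "\<And>i j. i \<in> R \<Longrightarrow> j \<in> S \<Longrightarrow> X i j = Y i j"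
  shows "block_inj X R S \<longleftrightarrow> block_inj Y R S"
  unfolding block_inj_def using assms by (simp cong: sum.cong)

lemma block_inj_scale_rows:
  assumes "block_inj X R S" and "\<And>i. i \<in> R \<Longrightarrow> r i \<noteq> 0"
  shows "block_inj (\<lambda>i j. r i * X i j) R S"
  unfolding block_inj_def
proof (intro allI impI ballI)
  fix v j assume v: "\<forall>i\<in>R. (\<Sum>j\<in>S. r i * X i j * v j) = 0" and j: "j \<in> S"
  have "(\<Sum>j\<in>S. X i j * v j) = 0" if "i \<in> R" for i
  proof -
    have "r i * (\<Sum>j\<in>S. X i j * v j) = 0"
      using v that by (simp add: sum_distrib_left mult.assoc)
    then show ?thesis using assms(2)[OF that] by simp
  qed
  then show "v j = 0" using block_injD[OF assms(1) _ j] by blast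
qed

lemma block_inj_reindex:
  assumes p: "bij_betw p A R" and q: "bij_betw q B S"
  shows "block_inj (\<lambda>a b. X (p a) (q b)) A B \<longleftrightarrow> block_inj X R S"
proof
  assume L: "block_inj (\<lambda>a b. X (p a) (q b)) A B"
  show "block_inj X R S" unfolding block_inj_def
  proof (intro allI impI ballI)
    fix v j assume v: "\<forall>i\<in>R. (\<Sum>j\<in>S. X i j * v j) = 0" and j: "j \<in> S"
    have "(\<Sum>b\<in>B. X (p a) (q b) * v (q b)) = 0" if "a \<in> A" for a
      using v that p sum.reindex_bij_betw[OF q, of "\<lambda>j. X (p a) j * v j"] by (auto dest: bij_betwE)
    then have "\<forall>b\<in>B. v (q b) = 0" using block_injD[OF L, of "\<lambda>b. v (q b)"] by blast
    moreover obtain b where "b \<in> B" "q b = j" using q j by (metis bij_betw_iff_bijections)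
    ultimately show "v j = 0" by auto
  qed
next
  assume L: "block_inj X R S"
  show "block_inj (\<lambda>a b. X (p a) (q b)) A B" unfolding block_inj_def
  proof (intro allI impI ballI)
    fix w b assume w: "\<forall>a\<in>A. (\<Sum>b\<in>B. X (p a) (q b) * w b) = 0" and b: "b \<in> B"
    define v where "v j = w (the_inv_into B q j)" for j
    have vq: "v (q b') = w b'" if "b' \<in> B" for b'
      unfolding v_def using the_inv_into_f_f[OF bij_betw_imp_inj_on[OF q] that] by simp
    have "(\<Sum>j\<in>S. X i j * v j) = 0" if i: "i \<in> R" for i
    proof -
      obtain a where a: "a \<in> A" "p a = i" using p i by (metis bij_betw_iff_bijections)
      have "(\<Sum>j\<in>S. X i j * v j) = (\<Sum>b\<in>B. X (p a) (q b) * w b)"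
        using vq a by (simp add: sum.reindex_bij_betw[OF q, symmetric])
      also have "\<dots> = 0" using w a by blast
      finally show ?thesis .
    qed
    then show "w b = 0" using block_injD[OF L] vq[OF b] b q by (metis bij_betwE)
  qed
qed

lemma bij_betw_pick:
  assumes "finite S"
  shows "bij_betw (pick S) {0..<card S} S"
proof -
  have inj: "inj_on (pick S) {0..<card S}"
  proof (rule inj_onI, rule ccontr)
    fix a b assume "a \<in> {0..<card S}" "b \<in> {0..<card S}" "pick S a = pick S b" "a \<noteq> b"
    then show False using pick_mono[of b S a] pick_mono[of a S b] by (cases "a < b") auto
  qed
  have "pick S ` {0..<card S} \<subseteq> S" using pick_in_set by auto
  moreover have "card (pick S ` {0..<card S}) = card S" using card_image[OF inj] by simp
  ultimately have "pick S ` {0..<card S} = S" using card_subset_eq[OF assms] by blast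
  then show ?thesis using inj by (simp add: bij_betw_def)
qed

lemma det_mat_nonzero_iff_block_inj:
  fixes X :: "nat \<Rightarrow> nat \<Rightarrow> 'a::field"
  shows "det (mat k k (\<lambda>(a,b). X a b)) \<noteq> 0 \<longleftrightarrow> block_inj X {0..<k} {0..<k}"
proof -
  let ?M = "mat k k (\<lambda>(a,b). X a b)"
  have M: "?M \<in> carrier_mat k k" by simp
  have mult: "(?M *\<^sub>v v) $ a = (\<Sum>b\<in>{0..<k}. X a b * v $ b)" if "a < k" "v \<in> carrier_vec k" for a v
    using that by (auto simp: scalar_prod_def intro!: sum.cong)
  show ?thesis
  proof
    assume d: "det ?M \<noteq> 0"
    show "block_inj X {0..<k} {0..<k}" unfolding block_inj_def
    proof (intro allI impI ballI, rule ccontr)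
      fix v j assume v: "\<forall>i\<in>{0..<k}. (\<Sum>j\<in>{0..<k}. X i j * v j) = 0"
        and j: "j \<in> {0..<k}" and nz: "v j \<noteq> 0"
      have "vec k v \<noteq> 0\<^sub>v k" using j nz by (metis atLeastLessThan_iff index_vec index_zero_vec(1))
      moreover have "?M *\<^sub>v vec k v = 0\<^sub>v k"
        by (rule eq_vecI, subst mult) (auto simp: v[rule_format])
      ultimately have "det ?M = 0"
        unfolding det_0_iff_vec_prod_zero_field[OF M] using vec_carrier[of k v] by blast
      with d show False by simp
    qed
  next
    assume K: "block_inj X {0..<k} {0..<k}"
    show "det ?M \<noteq> 0"
    proof
      assume "det ?M = 0"
      then obtain u where u: "u \<in> carrier_vec k" "u \<noteq> 0\<^sub>v k" "?M *\<^sub>v u = 0\<^sub>v k"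
        using det_0_iff_vec_prod_zero_field[OF M] by blast
      have sums: "(\<Sum>j\<in>{0..<k}. X i j * u $ j) = 0" if "i \<in> {0..<k}" for i
      proof -
        have "(\<Sum>j\<in>{0..<k}. X i j * u $ j) = (?M *\<^sub>v u) $ i"
          using mult[of i u] that u(1) by simp
        also have "\<dots> = 0" using u(3) that by simp
        finally show ?thesis .
      qed
      have "u $ j = 0" if "j < k" for j
        using block_injD[OF K, of "\<lambda>j. u $ j"] sums that by auto
      then have "u = 0\<^sub>v k" using u(1) by (intro eq_vecI) auto
      then show False using u(2) by simp
    qed
  qed
qed

lemma submatrix_eq_mat_pick:
  assumes "X \<in> carrier_mat n N" "R \<subseteq> {0..<n}" "S \<subseteq> {0..<N}"
  shows "submatrix X R S = mat (card R) (card S) (\<lambda>(a,b). X $$ (pick R a, pick S b))"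
proof -
  have "{i. i < dim_row X \<and> i \<in> R} = R" "{j. j < dim_col X \<and> j \<in> S} = S" using assms by auto
  then show ?thesis unfolding submatrix_def by simp
qed

lemma block_inj_iff_det_pick:
  assumes "finite R" "finite S" "card R = card S"
  shows "block_inj X R S \<longleftrightarrow> det (mat (card S) (card S) (\<lambda>(a,b). X (pick R a) (pick S b))) \<noteq> 0"
proof -
  have "block_inj X R S \<longleftrightarrow> block_inj (\<lambda>a b. X (pick R a) (pick S b)) {0..<card S} {0..<card S}"
    using block_inj_reindex[OF bij_betw_pick[OF assms(1)] bij_betw_pick[OF assms(2)], of X] assms(3)
    by simp
  then show ?thesis by (simp add: det_mat_nonzero_iff_block_inj)
qed

lemma det_submatrix_nonzero_iff:
  assumes "X \<in> carrier_mat n N" "R \<subseteq> {0..<n}" "S \<subseteq> {0..<N}"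
  shows "det (submatrix X R S) \<noteq> 0 \<longleftrightarrow> card R = card S \<and> block_inj (\<lambda>i j. X $$ (i,j)) R S"
proof (cases "card R = card S")
  case True
  have "finite R" "finite S" using assms(2,3) finite_subset by blast+
  with True show ?thesis by (simp add: submatrix_eq_mat_pick[OF assms] block_inj_iff_det_pick)
qed (simp add: submatrix_eq_mat_pick[OF assms] det_def)

section \<open>Splitting a nonsingular sum\<close>

lemma det_add_rows_split:
  fixes f g :: "nat \<Rightarrow> nat \<Rightarrow> 'a::comm_ring_1"
  shows "det (mat k k (\<lambda>(a,b). f a b + g a b)) =
    (\<Sum>T\<in>Pow {0..<k}. det (mat k k (\<lambda>(a,b). if a \<in> T then f a b else g a b)))"
proof -
  let ?P = "{p. p permutes {0..<k}}"
  have pin: "p a < k" if "p \<in> ?P" "a < k" for p a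
    using that permutes_in_image[of p "{0..<k}" a] by auto
  have "det (mat k k (\<lambda>(a,b). f a b + g a b)) =
     (\<Sum>p\<in>?P. signof p * (\<Prod>a\<in>{0..<k}. f a (p a) + g a (p a)))"
    by (subst det_def'[of _ k], simp, intro sum.cong refl arg_cong[where f="\<lambda>x. _ * x"] prod.cong, auto simp: pin)
  also have "\<dots> = (\<Sum>p\<in>?P. signof p * (\<Sum>T\<in>Pow {0..<k}. (\<Prod>a\<in>T. f a (p a)) * (\<Prod>a\<in>{0..<k}-T. g a (p a))))"
    by (simp add: prod_add)
  also have "\<dots> = (\<Sum>T\<in>Pow {0..<k}. \<Sum>p\<in>?P. signof p * ((\<Prod>a\<in>T. f a (p a)) * (\<Prod>a\<in>{0..<k}-T. g a (p a))))"
    by (simp add: sum_distrib_left sum.swap[of _ ?P])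
  also have "\<dots> = (\<Sum>T\<in>Pow {0..<k}. det (mat k k (\<lambda>(a,b). if a \<in> T then f a b else g a b)))"
  proof (rule sum.cong[OF refl])
    fix T assume T: "T \<in> Pow {0..<k}"
    show "(\<Sum>p\<in>?P. signof p * ((\<Prod>a\<in>T. f a (p a)) * (\<Prod>a\<in>{0..<k}-T. g a (p a)))) =
      det (mat k k (\<lambda>(a,b). if a \<in> T then f a b else g a b))"
    proof (subst det_def'[of _ k], simp, intro sum.cong refl arg_cong[where f="\<lambda>x. _ * x"])
      fix p assume p: "p \<in> ?P"
      have "(\<Prod>i = 0..<k. mat k k (\<lambda>(a,b). if a \<in> T then f a b else g a b) $$ (i, p i))
          = (\<Prod>i \<in> {0..<k}. if i \<in> T then f i (p i) else g i (p i))"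
        by (intro prod.cong refl, auto simp: pin[OF p])
      also have "\<dots> = (\<Prod>a\<in>T. f a (p a)) * (\<Prod>a\<in>{0..<k}-T. g a (p a))"
        using T by (subst prod.If_cases, auto intro!: arg_cong2[where f="(*)"] prod.cong)
      finally show "(\<Prod>a\<in>T. f a (p a)) * (\<Prod>a\<in>{0..<k}-T. g a (p a)) =
         (\<Prod>i = 0..<k. mat k k (\<lambda>(a,b). if a \<in> T then f a b else g a b) $$ (i, p i))" by simp
    qed
  qed
  finally show ?thesis .
qed

lemma det_mat_transpose:
  fixes h :: "nat \<Rightarrow> nat \<Rightarrow> 'a::comm_ring_1"
  shows "det (mat k k (\<lambda>(a,b). h b a)) = det (mat k k (\<lambda>(a,b). h a b))"
proof -
  have "mat k k (\<lambda>(a,b). h b a) = transpose_mat (mat k k (\<lambda>(a,b). h a b))"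
    by (rule eq_matI) auto
  then show ?thesis using det_transpose[of "mat k k (\<lambda>(a,b). h a b)" k] by simp
qed

lemma det_add_cols_split:
  fixes f g :: "nat \<Rightarrow> nat \<Rightarrow> 'a::comm_ring_1"
  shows "det (mat k k (\<lambda>(a,b). f a b + g a b)) =
    (\<Sum>U\<in>Pow {0..<k}. det (mat k k (\<lambda>(a,b). if b \<in> U then f a b else g a b)))"
  using det_add_rows_split[where f="\<lambda>b a. f a b" and g="\<lambda>b a. g a b" and k=k]
  by (simp add: det_mat_transpose[where h="\<lambda>a b. f b a + g b a"]
      det_mat_transpose[where h="\<lambda>a b. if a \<in> _ then f b a else g b a"])

lemma block_inj_of_det_block_zero:
  fixes Y :: "nat \<Rightarrow> nat \<Rightarrow> 'a::field"
  assumes det: "det (mat k k (\<lambda>(a,b). Y a b)) \<noteq> 0" and T: "T \<subseteq> {0..<k}" and U: "U \<subseteq> {0..<k}"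
    and zero: "\<And>a b. a < k \<Longrightarrow> a \<notin> T \<Longrightarrow> b \<in> U \<Longrightarrow> Y a b = 0"
  shows "block_inj Y T U"
  unfolding block_inj_def
proof (intro allI impI ballI)
  fix v j assume v: "\<forall>i\<in>T. (\<Sum>j\<in>U. Y i j * v j) = 0" and j: "j \<in> U"
  define w where "w b = (if b \<in> U then v b else 0)" for b
  have "(\<Sum>b\<in>{0..<k}. Y a b * w b) = 0" if a: "a \<in> {0..<k}" for a
  proof -
    have "(\<Sum>b\<in>{0..<k}. Y a b * w b) = (\<Sum>b\<in>{0..<k}. if b \<in> U then Y a b * v b else 0)"
      by (intro sum.cong) (auto simp: w_def)
    also have "\<dots> = (\<Sum>b\<in>U. Y a b * v b)"
      using U by (simp add: sum.inter_restrict[symmetric] Int_absorb1)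
    also have "\<dots> = 0" using v zero a by (cases "a \<in> T") auto
    finally show ?thesis .
  qed
  then have "w j = 0"
    using block_injD[OF det[unfolded det_mat_nonzero_iff_block_inj]] j U by blast
  then show "v j = 0" using j by (simp add: w_def)
qed

lemma card_le_of_det_block_zero:
  fixes Y :: "nat \<Rightarrow> nat \<Rightarrow> 'a::field"
  assumes det: "det (mat k k (\<lambda>(a,b). Y a b)) \<noteq> 0" and T: "T \<subseteq> {0..<k}" and U: "U \<subseteq> {0..<k}"
    and zero: "\<And>a b. a \<in> T \<Longrightarrow> b < k \<Longrightarrow> b \<notin> U \<Longrightarrow> Y a b = 0"
  shows "card T \<le> card U"
proof -
  obtain p where p: "p permutes {0..<k}"
    and nz: "(\<Prod>a = 0..<k. mat k k (\<lambda>(a,b). Y a b) $$ (a, p a)) \<noteq> 0"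
    using det sum.not_neutral_contains_not_neutral unfolding det_def'[OF mat_carrier] by force
  have "p a \<in> U" if a: "a \<in> T" for a
  proof -
    have "a < k" using a T by auto
    then have "p a < k" using permutes_in_image[OF p, of a] by auto
    moreover have "mat k k (\<lambda>(a,b). Y a b) $$ (a, p a) \<noteq> 0"
      using nz \<open>a < k\<close> by (simp add: prod_zero_iff)
    then have "Y a (p a) \<noteq> 0" using \<open>a < k\<close> \<open>p a < k\<close> by simp
    ultimately show ?thesis using zero a by blast
  qed
  then have "p ` T \<subseteq> U" by blast
  moreover have "inj_on p T" using permutes_inj[OF p] by (simp add: inj_on_def)
  ultimately show ?thesis using card_inj_on_le finite_subset[OF U] by blast
qed

lemma block_diagonal_det_nonzero:
  fixes Y :: "nat \<Rightarrow> nat \<Rightarrow> 'a::field"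
  assumes det: "det (mat k k (\<lambda>(a,b). Y a b)) \<noteq> 0" and T: "T \<subseteq> {0..<k}" and U: "U \<subseteq> {0..<k}"
    and zero: "\<And>a b. a < k \<Longrightarrow> b < k \<Longrightarrow> (a \<in> T \<longleftrightarrow> b \<notin> U) \<Longrightarrow> Y a b = 0"
  shows "card T = card U \<and> block_inj Y T U \<and> block_inj Y ({0..<k} - T) ({0..<k} - U)"
proof (intro conjI)
  have "card T \<le> card U" by (rule card_le_of_det_block_zero[OF det T U]) (meson T atLeastLessThan_iff subsetD zero)
  moreover have "card ({0..<k} - T) \<le> card ({0..<k} - U)"
    by (rule card_le_of_det_block_zero[OF det]) (use zero in auto)
  ultimately show "card T = card U"
    using T U card_Diff_subset[of T "{0..<k}"] card_Diff_subset[of U "{0..<k}"]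
      card_mono[OF _ T] card_mono[OF _ U] finite_subset by fastforce
  show "block_inj Y T U" by (rule block_inj_of_det_block_zero[OF det T U]) (use zero U in auto)
  show "block_inj Y ({0..<k} - T) ({0..<k} - U)"
    by (rule block_inj_of_det_block_zero[OF det]) (use zero in auto)
qed

text \<open>A Laplace expansion in disguise: expanding \<open>det (f + g)\<close> by rows and then by columns.\<close>

lemma block_inj_add_split_square:
  fixes f g :: "nat \<Rightarrow> nat \<Rightarrow> 'a::field"
  assumes "det (mat k k (\<lambda>(a,b). f a b + g a b)) \<noteq> 0"
  shows "\<exists>T U. T \<subseteq> {0..<k} \<and> U \<subseteq> {0..<k} \<and> card T = card U \<and>
    block_inj f T U \<and> block_inj g ({0..<k} - T) ({0..<k} - U)"
proof -
  obtain T where T: "T \<subseteq> {0..<k}"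
    and detT: "det (mat k k (\<lambda>(a,b). if a \<in> T then f a b else g a b)) \<noteq> 0"
    using sum.not_neutral_contains_not_neutral[OF assms[unfolded det_add_rows_split]] by auto
  define f' where "f' a b = (if a \<in> T then f a b else 0)" for a b
  define g' where "g' a b = (if a \<in> T then 0 else g a b)" for a b
  have "(\<lambda>(a,b). if a \<in> T then f a b else g a b) = (\<lambda>(a,b). f' a b + g' a b)"
    by (auto simp: f'_def g'_def)
  with detT obtain U where U: "U \<subseteq> {0..<k}"
    and detU: "det (mat k k (\<lambda>(a,b). if b \<in> U then f' a b else g' a b)) \<noteq> 0"
    using sum.not_neutral_contains_not_neutral[of _ "Pow {0..<k}"] by (auto simp: det_add_cols_split)
  have "card T = card U \<and> block_inj (\<lambda>a b. if b \<in> U then f' a b else g' a b) T U \<and>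
      block_inj (\<lambda>a b. if b \<in> U then f' a b else g' a b) ({0..<k} - T) ({0..<k} - U)"
    by (rule block_diagonal_det_nonzero[OF detU T U]) (auto simp: f'_def g'_def)
  moreover have "block_inj (\<lambda>a b. if b \<in> U then f' a b else g' a b) T U \<longleftrightarrow> block_inj f T U"
    by (rule block_inj_cong) (simp add: f'_def)
  moreover have "block_inj (\<lambda>a b. if b \<in> U then f' a b else g' a b) ({0..<k} - T) ({0..<k} - U)
      \<longleftrightarrow> block_inj g ({0..<k} - T) ({0..<k} - U)"
    by (rule block_inj_cong) (simp add: g'_def)
  ultimately show ?thesis using T U by blast
qed

lemma block_inj_add_split:
  fixes f g :: "nat \<Rightarrow> nat \<Rightarrow> 'a::field"
  assumes R: "finite R" and C: "finite C" and card: "card R = card C"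
    and inj: "block_inj (\<lambda>i j. f i j + g i j) R C"
  shows "\<exists>T U. T \<subseteq> R \<and> U \<subseteq> C \<and> card T = card U \<and> block_inj f T U \<and> block_inj g (R - T) (C - U)"
proof -
  let ?k = "card C"
  have bR: "bij_betw (pick R) {0..<?k} R" using bij_betw_pick[OF R] card by simp
  have bC: "bij_betw (pick C) {0..<?k} C" using bij_betw_pick[OF C] .
  have det: "det (mat ?k ?k (\<lambda>(a,b). f (pick R a) (pick C b) + g (pick R a) (pick C b))) \<noteq> 0"
    using inj block_inj_iff_det_pick[OF R C card, of "\<lambda>i j. f i j + g i j"] by simp
  obtain T U where T: "T \<subseteq> {0..<?k}" and U: "U \<subseteq> {0..<?k}" and "card T = card U"
    and f: "block_inj (\<lambda>a b. f (pick R a) (pick C b)) T U"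
    and g: "block_inj (\<lambda>a b. g (pick R a) (pick C b)) ({0..<?k} - T) ({0..<?k} - U)"
    using block_inj_add_split_square[OF det] by blast
  have bT: "bij_betw (pick R) T (pick R ` T)" and bU: "bij_betw (pick C) U (pick C ` U)"
    using bij_betw_subset[OF bR T refl] bij_betw_subset[OF bC U refl] by blast+
  have sub: "pick R ` T \<subseteq> R" "pick C ` U \<subseteq> C"
    using bij_betw_imp_surj_on[OF bR] bij_betw_imp_surj_on[OF bC] T U by blast+
  have "block_inj f (pick R ` T) (pick C ` U)"
    using f block_inj_reindex[OF bT bU, of f] by simp
  moreover have "block_inj g (R - pick R ` T) (C - pick C ` U)"
    using g block_inj_reindex[OF bij_betw_DiffI[OF bR bT T sub(1)] bij_betw_DiffI[OF bC bU U sub(2)], of g]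
    by simp
  moreover have "card (pick R ` T) = card (pick C ` U)"
    using \<open>card T = card U\<close> bij_betw_same_card[OF bT] bij_betw_same_card[OF bU] by simp
  ultimately show ?thesis using sub by blast
qed

section \<open>Nonsingular perturbations\<close>

lemma poly_det_mat:
  fixes P :: "nat \<Rightarrow> nat \<Rightarrow> 'a::comm_ring_1 poly"
  shows "poly (det (mat k k (\<lambda>(a,b). P a b))) x = det (mat k k (\<lambda>(a,b). poly (P a b) x))"
proof -
  have hom: "comm_ring_hom (\<lambda>p. poly p x)" by unfold_locales auto
  have "map_mat (\<lambda>p. poly p x) (mat k k (\<lambda>(a,b). P a b)) = mat k k (\<lambda>(a,b). poly (P a b) x)"
    by (rule eq_matI) auto
  then show ?thesis using comm_ring_hom.hom_det[OF hom, of "mat k k (\<lambda>(a,b). P a b)"] by simp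
qed

lemma block_inj_add_line:
  fixes G H :: "nat \<Rightarrow> nat \<Rightarrow> 'a::real_field"
  assumes R: "finite R" and C: "finite C" and card: "card R = card C" and G: "block_inj G R C"
  shows "\<exists>s::real. s \<noteq> 0 \<and> block_inj (\<lambda>i j. G i j + of_real s * H i j) R C"
proof -
  let ?k = "card C"
  define p where "p = det (mat ?k ?k (\<lambda>(a,b). [:G (pick R a) (pick C b), H (pick R a) (pick C b):]))"
  have poly_p: "poly p x \<noteq> 0 \<longleftrightarrow> block_inj (\<lambda>i j. G i j + x * H i j) R C" for x
    unfolding p_def poly_det_mat block_inj_iff_det_pick[OF R C card] by (simp add: mult.commute)
  then have "poly p 0 \<noteq> 0" using G by simp
  then have "finite (of_real -` {x. poly p x = 0} :: real set)"
    by (intro finite_vimageI poly_roots_finite) (auto simp: inj_on_def)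
  then obtain s :: real where "s \<notin> insert 0 (of_real -` {x. poly p x = 0})"
    using ex_new_if_finite[OF infinite_UNIV_char_0] by (meson finite_insert)
  then show ?thesis using poly_p by auto
qed

lemma block_inj_block_triangular:
  assumes fin: "finite C1" "finite C2" and disj: "R1 \<inter> R2 = {}" "C1 \<inter> C2 = {}"
    and F: "block_inj F R1 C1" and E: "block_inj E R2 C2"
    and E_zero: "\<And>i j. i \<in> R2 \<Longrightarrow> j \<in> C1 \<Longrightarrow> E i j = 0"
  shows "block_inj (\<lambda>i j. if i \<in> R2 then E i j else F i j) (R1 \<union> R2) (C1 \<union> C2)"
  unfolding block_inj_def
proof (intro allI impI ballI)
  let ?G = "\<lambda>i j. if i \<in> R2 then E i j else F i j"
  fix v j assume v: "\<forall>i\<in>R1 \<union> R2. (\<Sum>j\<in>C1 \<union> C2. ?G i j * v j) = 0" and j: "j \<in> C1 \<union> C2"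
  have split: "(\<Sum>j\<in>C1. ?G i j * v j) + (\<Sum>j\<in>C2. ?G i j * v j) = 0" if "i \<in> R1 \<union> R2" for i
    using v[rule_format, OF that] fin disj by (simp add: sum.union_disjoint)
  have "(\<Sum>j\<in>C2. E i j * v j) = 0" if i: "i \<in> R2" for i
  proof -
    have "(\<Sum>j\<in>C1. E i j * v j) = 0" using i E_zero by (intro sum.neutral) auto
    then show ?thesis using split[of i] i by simp
  qed
  then have v2: "v j = 0" if "j \<in> C2" for j
    using block_injD[OF E] that by blast
  have "(\<Sum>j\<in>C1. F i j * v j) = 0" if i: "i \<in> R1" for i
  proof -
    have "i \<notin> R2" using i disj by blast
    then show ?thesis using split[of i] i v2 by simp
  qed
  then have "v j = 0" if "j \<in> C1" for j
    using block_injD[OF F] that by blast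
  with v2 j show "v j = 0" by blast
qed

lemma block_inj_add_triangular:
  fixes F E :: "nat \<Rightarrow> nat \<Rightarrow> 'a::real_field"
  assumes fin: "finite R1" "finite R2" "finite C1" "finite C2"
    and disj: "R1 \<inter> R2 = {}" "C1 \<inter> C2 = {}" and card: "card (R1 \<union> R2) = card (C1 \<union> C2)"
    and F: "block_inj F R1 C1" and E: "block_inj E R2 C2"
    and E_zero: "\<And>i j. i \<in> R1 \<union> R2 \<Longrightarrow> j \<in> C1 \<union> C2 \<Longrightarrow> \<not> (i \<in> R2 \<and> j \<in> C2) \<Longrightarrow> E i j = 0"
  shows "\<exists>t::real. block_inj (\<lambda>i j. F i j + of_real t * E i j) (R1 \<union> R2) (C1 \<union> C2)"
proof -
  \<comment> \<open>dividing the rows in \<open>R2\<close> by \<open>s\<close> turns \<open>G + s H\<close> into \<open>F + (1/s) E\<close>\<close>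
  define G where "G = (\<lambda>i j. if i \<in> R2 then E i j else F i j)"
  define H where "H i j = (if i \<in> R2 then F i j else 0)" for i j
  have G_inj: "block_inj G (R1 \<union> R2) (C1 \<union> C2)"
    unfolding G_def using disj E_zero
    by (intro block_inj_block_triangular[OF fin(3,4) disj F E]) auto
  then obtain s :: real where "s \<noteq> 0" and s: "block_inj (\<lambda>i j. G i j + of_real s * H i j) (R1 \<union> R2) (C1 \<union> C2)"
    using block_inj_add_line[OF _ _ card G_inj] fin by blast
  have scaled: "block_inj (\<lambda>i j. (if i \<in> R2 then of_real (1 / s) else 1) * (G i j + of_real s * H i j))
      (R1 \<union> R2) (C1 \<union> C2)"
    by (rule block_inj_scale_rows[OF s]) (use \<open>s \<noteq> 0\<close> in simp)
  have "block_inj (\<lambda>i j. (if i \<in> R2 then of_real (1 / s) else 1) * (G i j + of_real s * H i j))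
      (R1 \<union> R2) (C1 \<union> C2) \<longleftrightarrow> block_inj (\<lambda>i j. F i j + of_real (1 / s) * E i j) (R1 \<union> R2) (C1 \<union> C2)"
  proof (rule block_inj_cong)
    fix i j assume ij: "i \<in> R1 \<union> R2" "j \<in> C1 \<union> C2"
    show "(if i \<in> R2 then of_real (1 / s) else 1) * (G i j + of_real s * H i j) =
      F i j + of_real (1 / s) * E i j"
    proof (cases "i \<in> R2")
      case True
      have inv: "of_real (1 / s) * of_real s = (1::'a)" using \<open>s \<noteq> 0\<close> by (simp flip: of_real_mult)
      have "of_real (1 / s) * (E i j + of_real s * F i j)
          = of_real (1 / s) * E i j + (of_real (1 / s) * of_real s) * F i j"
        by (simp add: distrib_left mult.assoc)
      with True inv show ?thesis by (simp add: G_def H_def)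
    next
      case False
      then show ?thesis using ij E_zero by (simp add: G_def H_def)
    qed
  qed
  then have "block_inj (\<lambda>i j. F i j + of_real (1 / s) * E i j) (R1 \<union> R2) (C1 \<union> C2)"
    using scaled by (rule iffD1)
  then show ?thesis by (rule exI)
qed

section \<open>Rank and maximal minors\<close>

lemma (in vec_space) rank_le_dim_row:
  assumes "A \<in> carrier_mat n nc"
  shows "rank A \<le> n"
proof -
  obtain S where S: "maximal S (\<lambda>T. T \<subseteq> set (cols A) \<and> lin_indpt T)"
    using maximal_exists[of "\<lambda>T. T \<subseteq> set (cols A) \<and> lin_indpt T" "card (set (cols A))" "{}"]
    by (meson List.finite_set card_mono empty_iff empty_subsetI finite_lin_indpt2 rev_finite_subset)
  have "S \<subseteq> carrier_vec n" "lin_indpt S"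
    using S cols_dim[of A] assms unfolding maximal_def by auto
  then have "card S \<le> dim" using li_le_dim(2)[OF fin_dim] by simp
  then show ?thesis using rank_card_indpt[OF assms S] dim_is_n by simp
qed

lemma submatrix_UNIV_rows:
  assumes "A \<in> carrier_mat n N"
  shows "submatrix A UNIV J = submatrix A {0..<n} J"
proof -
  have "pick UNIV i = pick {0..<n} i" if "i < n" for i
    using that pick_reduce_set[where i=i and m=n and I=UNIV] pick_reduce_set[where i=i and m=n and I="{0..<n}"]
    by simp
  then show ?thesis using assms by (intro eq_matI) (auto simp: dim_submatrix submatrix_index)
qed

lemma set_cols_submatrix_UNIV:
  assumes A: "A \<in> carrier_mat n nc" and C: "C \<subseteq> {0..<nc}"
  shows "set (cols (submatrix A UNIV C)) = col A ` C"
proof -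
  let ?B = "submatrix A UNIV C"
  have C': "{j. j < nc \<and> j \<in> C} = C" using C by auto
  have dim: "dim_col ?B = card C" using A C' by (simp add: dim_submatrix)
  have col_B: "col ?B b = col A (pick C b)" if "b < card C" for b
    using that A C' pick_le[of b nc C]
    by (intro eq_vecI) (auto simp: dim_submatrix submatrix_index pick_UNIV)
  have "set (cols ?B) = (\<lambda>b. col ?B b) ` {0..<card C}" using dim by (simp add: cols_def)
  also have "\<dots> = (\<lambda>b. col A (pick C b)) ` {0..<card C}" using col_B by (intro image_cong refl) simp
  also have "\<dots> = col A ` (pick C ` {0..<card C})" by (simp add: image_image)
  also have "pick C ` {0..<card C} = C"
    by (rule bij_betw_imp_surj_on[OF bij_betw_pick[OF finite_subset[OF C finite_atLeastLessThan]]])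
  finally show ?thesis .
qed

lemma (in vec_space) full_rank_imp_nonsingular_minor:
  assumes A: "A \<in> carrier_mat n nc" and r: "rank A = n"
  shows "\<exists>C. C \<subseteq> {0..<nc} \<and> card C = n \<and> det (submatrix A {0..<n} C) \<noteq> 0"
proof -
  obtain S where S: "maximal S (\<lambda>T. T \<subseteq> set (cols A) \<and> lin_indpt T)"
    using maximal_exists[of "\<lambda>T. T \<subseteq> set (cols A) \<and> lin_indpt T" "card (set (cols A))" "{}"]
    by (meson List.finite_set card_mono empty_iff empty_subsetI finite_lin_indpt2 rev_finite_subset)
  have cS: "card S = n" using rank_card_indpt[OF A S] r by simp
  have Ssub: "S \<subseteq> set (cols A)" and li: "lin_indpt S" using S unfolding maximal_def by simp_all
  have "\<exists>j. j < nc \<and> col A j = s" if s: "s \<in> S" for s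
  proof -
    have "s \<in> set (cols A)" using Ssub s by blast
    then obtain j where "j < length (cols A)" "cols A ! j = s" by (meson in_set_conv_nth)
    then show ?thesis using A by auto
  qed
  then obtain ix where ix: "\<And>s. s \<in> S \<Longrightarrow> ix s < nc \<and> col A (ix s) = s" by metis
  define C where "C = ix ` S"
  have inj: "inj_on ix S"
  proof (rule inj_onI)
    fix x y assume "x \<in> S" "y \<in> S" "ix x = ix y"
    then show "x = y" using ix[of x] ix[of y] by metis
  qed
  have cC: "card C = n" unfolding C_def using card_image[OF inj] cS by simp
  have Csub: "C \<subseteq> {0..<nc}" unfolding C_def using ix by auto
  let ?B = "submatrix A UNIV C"
  have "{j. j < nc \<and> j \<in> C} = C" using Csub by auto
  then have B: "?B \<in> carrier_mat n n" using A cC by (intro carrier_matI) (simp_all add: dim_submatrix)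
  have "set (cols ?B) = col A ` C" by (rule set_cols_submatrix_UNIV[OF A Csub])
  also have "\<dots> = (\<lambda>s. col A (ix s)) ` S" unfolding C_def by (simp add: image_image)
  also have "\<dots> = (\<lambda>s. s) ` S" using ix by (intro image_cong refl) auto
  also have "\<dots> = S" by simp
  finally have colsB: "set (cols ?B) = S" .
  have "length (cols ?B) = n" using B by simp
  then have "distinct (cols ?B)" using colsB cS card_distinct[of "cols ?B"] by simp
  then have "rank ?B = n" using lin_indpt_full_rank[OF B] colsB li by simp
  then have "det ?B \<noteq> 0" using det_rank_iff[OF B] by simp
  then have "det (submatrix A {0..<n} C) \<noteq> 0" using submatrix_UNIV_rows[OF A] by simp
  with Csub cC show ?thesis by blast
qed

lemma mrank_le_dim_row: "mrank M \<le> dim_row M"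
  unfolding mrank_def using vec_space.rank_le_dim_row[of M "dim_row M" "dim_col M"] by simp

lemma mrank_square_iff_det:
  assumes "M \<in> carrier_mat k k"
  shows "mrank M = k \<longleftrightarrow> det M \<noteq> 0"
  using vec_space.det_rank_iff[OF assms] assms unfolding mrank_def by simp

lemma mrank_eq_dim_row_iff:
  fixes M :: "'a::field mat"
  assumes M: "M \<in> carrier_mat n N"
  shows "mrank M = n \<longleftrightarrow> (\<exists>C \<subseteq> {0..<N}. card C = n \<and> block_inj (\<lambda>i j. M $$ (i,j)) {0..<n} C)"
proof
  assume "mrank M = n"
  then obtain C where "C \<subseteq> {0..<N}" "card C = n" "det (submatrix M {0..<n} C) \<noteq> 0"
    using vec_space.full_rank_imp_nonsingular_minor[OF M] M unfolding mrank_def by auto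
  then show "\<exists>C \<subseteq> {0..<N}. card C = n \<and> block_inj (\<lambda>i j. M $$ (i,j)) {0..<n} C"
    using det_submatrix_nonzero_iff[OF M] by auto
next
  assume "\<exists>C \<subseteq> {0..<N}. card C = n \<and> block_inj (\<lambda>i j. M $$ (i,j)) {0..<n} C"
  then obtain C where C: "C \<subseteq> {0..<N}" "card C = n" "block_inj (\<lambda>i j. M $$ (i,j)) {0..<n} C"
    by blast
  then have "det (submatrix M {0..<n} C) \<noteq> 0" using det_submatrix_nonzero_iff[OF M] by simp
  moreover have "{j. j < N \<and> j \<in> C} = C" using C by auto
  ultimately have "n \<le> vec_space.rank n M" using vec_space.rank_gt_minor[OF M] C(2) by fastforce
  then show "mrank M = n" using vec_space.rank_le_dim_row[OF M] M unfolding mrank_def by simp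
qed

section \<open>Zero patterns and generic rank\<close>

lemma Max_eq_upper_bound_iff:
  fixes S :: "nat set"
  assumes "S \<noteq> {}" and "\<And>x. x \<in> S \<Longrightarrow> x \<le> n"
  shows "Max S = n \<longleftrightarrow> n \<in> S"
proof -
  have "finite S" using assms(2) by (meson finite_nat_set_iff_bounded_le)
  then show ?thesis using Max_eq_iff[OF _ assms(1)] assms(2) by blast
qed

lemma generic_rank_eq_dim_row_iff:
  "generic_rank P = dim_row P \<longleftrightarrow> (\<exists>M \<in> realizations P. mrank (map_mat complex_of_real M) = dim_row P)"
proof -
  have "0\<^sub>m (dim_row P) (dim_col P) \<in> realizations P" by (auto simp: realizations_def)
  moreover have "mrank (map_mat complex_of_real M) \<le> dim_row P" if "M \<in> realizations P" for M
    using that mrank_le_dim_row[of "map_mat complex_of_real M"] by (auto simp: realizations_def)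
  ultimately have "generic_rank P = dim_row P \<longleftrightarrow>
      dim_row P \<in> {mrank (map_mat complex_of_real M) | M. M \<in> realizations P}"
    unfolding generic_rank_def by (intro Max_eq_upper_bound_iff) blast+
  then show ?thesis by auto
qed

lemma map_mat_submatrix: "map_mat f (submatrix A I J) = submatrix (map_mat f A) I J"
  by (rule eq_matI) (auto simp: dim_submatrix submatrix_index pick_le)

lemma realizationsI:
  assumes "dim_row M = dim_row P" "dim_col M = dim_col P"
    and "\<And>i j. i < dim_row P \<Longrightarrow> j < dim_col P \<Longrightarrow> \<not> P $$ (i,j) \<Longrightarrow> M $$ (i,j) = 0"
  shows "M \<in> realizations P"
  unfolding realizations_def using assms by blast

lemma realizationsD:
  assumes "M \<in> realizations P"
  shows "dim_row M = dim_row P" "dim_col M = dim_col P"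
    and "\<And>i j. i < dim_row P \<Longrightarrow> j < dim_col P \<Longrightarrow> \<not> P $$ (i,j) \<Longrightarrow> M $$ (i,j) = 0"
proof -
  have "M \<in> carrier_mat (dim_row P) (dim_col P)"
    and zero: "\<forall>i<dim_row P. \<forall>j<dim_col P. \<not> P $$ (i,j) \<longrightarrow> M $$ (i,j) = 0"
    using assms unfolding realizations_def by blast+
  then show "dim_row M = dim_row P" "dim_col M = dim_col P" by (simp_all add: carrier_matD)
  show "M $$ (i,j) = 0" if "i < dim_row P" "j < dim_col P" "\<not> P $$ (i,j)" for i j
    using zero that by blast
qed

lemma realizations_submatrix:
  assumes "D \<in> realizations P"
  shows "submatrix D I J \<in> realizations (submatrix P I J)"
  using assms by (auto simp: realizations_def dim_submatrix submatrix_index pick_le)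

lemma realizations_smult:
  assumes "D \<in> realizations P"
  shows "c \<cdot>\<^sub>m D \<in> realizations P"
  using assms by (auto simp: realizations_def)

lemma realizations_uminus:
  assumes "M \<in> realizations P"
  shows "- M \<in> realizations P"
proof -
  have "dim_row M = dim_row P" "dim_col M = dim_col P" using realizationsD[OF assms] by simp_all
  then show ?thesis using assms by (simp add: realizations_def)
qed

lemma card_less_than_less_card:
  fixes x :: nat
  assumes "x \<in> X" "finite X"
  shows "card {a\<in>X. a < x} < card X"
proof -
  have "x \<notin> {a\<in>X. a < x}" by simp
  then have "{a\<in>X. a < x} \<subset> X" using assms(1) by blast
  then show ?thesis using assms(2) by (simp add: psubset_card_mono)
qed

lemma realization_extend_submatrix:
  assumes P: "P \<in> carrier_mat n N" and R: "R \<subseteq> {0..<n}" and S: "S \<subseteq> {0..<N}"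
    and Q: "Q \<in> realizations (submatrix P R S)"
  shows "\<exists>E \<in> realizations P. (\<forall>i<n. \<forall>j<N. E $$ (i,j) \<noteq> 0 \<longrightarrow> i \<in> R \<and> j \<in> S) \<and>
    (\<forall>a<card R. \<forall>b<card S. E $$ (pick R a, pick S b) = Q $$ (a,b))"
proof -
  have fin: "finite R" "finite S" using R S finite_subset by blast+
  have sub: "submatrix P R S = mat (card R) (card S) (\<lambda>(a,b). P $$ (pick R a, pick S b))"
    by (rule submatrix_eq_mat_pick[OF P R S])
  \<comment> \<open>\<open>card {a\<in>R. a < i}\<close> is the position of \<open>i\<close> in \<open>R\<close>, inverting \<open>pick R\<close>\<close>
  define E where "E = mat n N (\<lambda>(i,j). if i \<in> R \<and> j \<in> S
    then Q $$ (card {a\<in>R. a < i}, card {b\<in>S. b < j}) else 0)"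
  have E_idx: "E $$ (i,j) = (if i \<in> R \<and> j \<in> S
      then Q $$ (card {a\<in>R. a < i}, card {b\<in>S. b < j}) else 0)" if "i < n" "j < N" for i j
    using that by (simp add: E_def)
  have realization: "E \<in> realizations P"
  proof (rule realizationsI)
    show "dim_row E = dim_row P" "dim_col E = dim_col P" using P by (simp_all add: E_def)
    fix i j assume i: "i < dim_row P" and j: "j < dim_col P" and np: "\<not> P $$ (i,j)"
    have ij: "i < n" "j < N" using i j P by simp_all
    show "E $$ (i,j) = 0"
    proof (cases "i \<in> R \<and> j \<in> S")
      case True
      let ?a = "card {a\<in>R. a < i}" and ?b = "card {b\<in>S. b < j}"
      have ab: "?a < card R" "?b < card S" using True fin card_less_than_less_card by simp_all
      have "pick R ?a = i" "pick S ?b = j" using True pick_card_in_set by simp_all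
      then have "\<not> submatrix P R S $$ (?a, ?b)" using np ab by (simp add: sub)
      with ab have "Q $$ (?a, ?b) = 0" using realizationsD(3)[OF Q] by (simp add: sub)
      then show ?thesis using True by (simp add: E_idx[OF ij])
    next
      case False
      then show ?thesis by (auto simp: E_idx[OF ij])
    qed
  qed
  have E_pick: "E $$ (pick R a, pick S b) = Q $$ (a,b)" if "a < card R" "b < card S" for a b
  proof -
    have "pick R a \<in> R" "pick S b \<in> S" by (rule pick_in_set, use that in simp)+
    moreover have "card {x\<in>R. x < pick R a} = a" "card {x\<in>S. x < pick S b} = b"
      by (rule card_pick, use that in simp)+
    moreover have "pick R a < n" "pick S b < N" using calculation(1,2) R S by auto
    ultimately show ?thesis using E_idx by simp
  qed
  have support: "\<forall>i<n. \<forall>j<N. E $$ (i,j) \<noteq> 0 \<longrightarrow> i \<in> R \<and> j \<in> S"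
    using E_idx by (simp split: if_splits)
  show ?thesis
    by (rule bexI[OF _ realization]) (use support E_pick in blast)
qed

lemma generic_rank_submatrix_eq_card_if:
  assumes P: "P \<in> carrier_mat n N" and R: "R \<subseteq> {0..<n}" and S: "S \<subseteq> {0..<N}"
    and card: "card R = card S" and D: "D \<in> realizations P"
    and inj: "block_inj (\<lambda>i j. complex_of_real (D $$ (i,j))) R S"
  shows "generic_rank (submatrix P R S) = card R"
proof -
  have D0: "D \<in> carrier_mat n N" using D P by (simp add: realizations_def)
  then have Dc: "map_mat complex_of_real D \<in> carrier_mat n N" by simp
  have "block_inj (\<lambda>i j. map_mat complex_of_real D $$ (i,j)) R S"
  proof (rule iffD2[OF block_inj_cong inj])
    fix i j assume "i \<in> R" "j \<in> S"
    then have "i < n" "j < N" using R S by auto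
    then show "map_mat complex_of_real D $$ (i,j) = complex_of_real (D $$ (i,j))" using D0 by simp
  qed
  with card have "det (submatrix (map_mat complex_of_real D) R S) \<noteq> 0"
    by (simp only: det_submatrix_nonzero_iff[OF Dc R S])
  then have det: "det (map_mat complex_of_real (submatrix D R S)) \<noteq> 0"
    by (simp add: map_mat_submatrix)
  have "submatrix D R S = mat (card R) (card S) (\<lambda>(a,b). D $$ (pick R a, pick S b))"
    by (rule submatrix_eq_mat_pick[OF D0 R S])
  then have "map_mat complex_of_real (submatrix D R S) \<in> carrier_mat (card R) (card R)"
    using card by simp
  then have rank: "mrank (map_mat complex_of_real (submatrix D R S)) = card R"
    using mrank_square_iff_det det by blast
  have dim: "dim_row (submatrix P R S) = card R" by (simp add: submatrix_eq_mat_pick[OF P R S])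
  have "\<exists>M \<in> realizations (submatrix P R S).
      mrank (map_mat complex_of_real M) = dim_row (submatrix P R S)"
    using realizations_submatrix[OF D] rank dim by (intro bexI) simp_all
  then show ?thesis using generic_rank_eq_dim_row_iff[of "submatrix P R S"] dim by simp
qed

lemma generic_rank_submatrix_eq_card_imp:
  assumes P: "P \<in> carrier_mat n N" and R: "R \<subseteq> {0..<n}" and S: "S \<subseteq> {0..<N}"
    and card: "card R = card S" and gr: "generic_rank (submatrix P R S) = card R"
  shows "\<exists>E \<in> realizations P. (\<forall>i<n. \<forall>j<N. E $$ (i,j) \<noteq> 0 \<longrightarrow> i \<in> R \<and> j \<in> S) \<and>
    block_inj (\<lambda>i j. complex_of_real (E $$ (i,j))) R S"
proof -
  have fin: "finite R" "finite S" using R S finite_subset by blast+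
  have sub: "submatrix P R S = mat (card S) (card S) (\<lambda>(a,b). P $$ (pick R a, pick S b))"
    using submatrix_eq_mat_pick[OF P R S] card by simp
  obtain Q where Q: "Q \<in> realizations (submatrix P R S)"
    and rank: "mrank (map_mat complex_of_real Q) = card S"
    using gr card generic_rank_eq_dim_row_iff[of "submatrix P R S"] by (auto simp: sub)
  have Qc: "map_mat complex_of_real Q \<in> carrier_mat (card S) (card S)"
    using Q by (simp add: realizations_def sub)
  obtain E where E: "E \<in> realizations P" and supp: "\<forall>i<n. \<forall>j<N. E $$ (i,j) \<noteq> 0 \<longrightarrow> i \<in> R \<and> j \<in> S"
    and E_pick: "\<forall>a<card R. \<forall>b<card S. E $$ (pick R a, pick S b) = Q $$ (a,b)"
    using realization_extend_submatrix[OF P R S Q] by blast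
  have "map_mat complex_of_real Q = mat (card S) (card S) (\<lambda>(a,b). complex_of_real (E $$ (pick R a, pick S b)))"
    using Qc E_pick card by (intro eq_matI) auto
  then have "block_inj (\<lambda>i j. complex_of_real (E $$ (i,j))) R S"
    using rank mrank_square_iff_det[OF Qc]
      block_inj_iff_det_pick[OF fin card, of "\<lambda>i j. complex_of_real (E $$ (i,j))"] by simp
  with E supp show ?thesis by blast
qed

section \<open>Full-rank perturbations\<close>

lemma full_rank_perturbation_imp_minors:
  fixes F :: "complex mat"
  assumes F: "F \<in> carrier_mat n N" and P: "P \<in> carrier_mat n N"
    and D: "D \<in> realizations P" and rank: "mrank (F + map_mat complex_of_real D) = n"
  shows "\<exists>JR JC JR' JC'. JR \<subseteq> {0..<n} \<and> JC \<subseteq> {0..<N} \<and> card JR = card JC \<and>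
    JR' \<subseteq> {0..<n} - JR \<and> JC' \<subseteq> {0..<N} - JC \<and> card JR' = n - card JC \<and> card JC' = n - card JC \<and>
    det (submatrix F JR JC) \<noteq> 0 \<and> generic_rank (submatrix P JR' JC') = card JR'"
proof -
  have D0: "D \<in> carrier_mat n N" using D P by (simp add: realizations_def)
  have M: "F + map_mat complex_of_real D \<in> carrier_mat n N" using F D0 by simp
  obtain C where C: "C \<subseteq> {0..<N}" "card C = n"
    and inj: "block_inj (\<lambda>i j. (F + map_mat complex_of_real D) $$ (i,j)) {0..<n} C"
    using rank mrank_eq_dim_row_iff[OF M] by blast
  have FD: "block_inj (\<lambda>i j. F $$ (i,j) + complex_of_real (D $$ (i,j))) {0..<n} C"
  proof (rule iffD1[OF block_inj_cong inj])
    fix i j assume "i \<in> {0..<n}" "j \<in> C"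
    then have "i < n" "j < N" using C by auto
    then show "(F + map_mat complex_of_real D) $$ (i,j) = F $$ (i,j) + complex_of_real (D $$ (i,j))"
      using F D0 by simp
  qed
  have fC: "finite C" using C finite_subset by blast
  have "card {0..<n} = card C" using C by simp
  from block_inj_add_split[OF finite_atLeastLessThan fC this FD]
  obtain T U where T: "T \<subseteq> {0..<n}" and U: "U \<subseteq> C" and TU: "card T = card U"
    and FTU: "block_inj (\<lambda>i j. F $$ (i,j)) T U"
    and DTU: "block_inj (\<lambda>i j. complex_of_real (D $$ (i,j))) ({0..<n} - T) (C - U)"
    by blast
  have U': "U \<subseteq> {0..<N}" using U C by blast
  have cards: "card ({0..<n} - T) = n - card U" "card (C - U) = n - card U"
    using card_Diff_subset[OF finite_subset[OF T] T] card_Diff_subset[OF finite_subset[OF U fC] U] TU C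
    by simp_all
  show ?thesis
  proof (intro exI conjI)
    show "T \<subseteq> {0..<n}" "U \<subseteq> {0..<N}" "card T = card U" by (fact T U' TU)+
    show "{0..<n} - T \<subseteq> {0..<n} - T" "C - U \<subseteq> {0..<N} - U" using C(1) by blast+
    show "card ({0..<n} - T) = n - card U" "card (C - U) = n - card U" by (fact cards)+
    show "det (submatrix F T U) \<noteq> 0"
      using det_submatrix_nonzero_iff[OF F T U'] TU FTU by simp
    show "generic_rank (submatrix P ({0..<n} - T) (C - U)) = card ({0..<n} - T)"
      by (rule generic_rank_submatrix_eq_card_if[OF P _ _ _ D DTU]) (use C(1) cards in auto)
  qed
qed

lemma minors_imp_full_rank_perturbation:
  fixes F :: "complex mat"
  assumes F: "F \<in> carrier_mat n N" and P: "P \<in> carrier_mat n N"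
    and JR: "JR \<subseteq> {0..<n}" and JC: "JC \<subseteq> {0..<N}" and card: "card JR = card JC"
    and JR': "JR' \<subseteq> {0..<n} - JR" and JC': "JC' \<subseteq> {0..<N} - JC"
    and card_JR': "card JR' = n - card JC" and card_JC': "card JC' = n - card JC"
    and det: "det (submatrix F JR JC) \<noteq> 0" and gr: "generic_rank (submatrix P JR' JC') = card JR'"
  shows "\<exists>D \<in> realizations P. mrank (F + map_mat complex_of_real D) = n"
proof -
  have fin: "finite JR" "finite JR'" "finite JC" "finite JC'" using JR JR' JC JC' finite_subset by blast+
  have disj: "JR \<inter> JR' = {}" "JC \<inter> JC' = {}" using JR' JC' by blast+
  have "card JR' = card ({0..<n} - JR)" using card_Diff_subset[OF fin(1) JR] card_JR' card by simp
  then have "JR' = {0..<n} - JR" using card_subset_eq[of "{0..<n} - JR" JR'] JR' by simp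
  then have rows: "JR \<union> JR' = {0..<n}" using JR by blast
  have "card JC \<le> n" using card card_mono[OF _ JR] by simp
  then have cols: "card (JC \<union> JC') = n" using card_Un_disjoint[OF fin(3,4) disj(2)] card_JC' by simp
  have FJ: "block_inj (\<lambda>i j. F $$ (i,j)) JR JC" using det det_submatrix_nonzero_iff[OF F JR JC] by blast
  have JR'n: "JR' \<subseteq> {0..<n}" and JC'N: "JC' \<subseteq> {0..<N}" using JR' JC' by blast+
  have "card JR' = card JC'" using card_JR' card_JC' by simp
  obtain E where E: "E \<in> realizations P"
    and supp: "\<forall>i<n. \<forall>j<N. E $$ (i,j) \<noteq> 0 \<longrightarrow> i \<in> JR' \<and> j \<in> JC'"
    and EJ: "block_inj (\<lambda>i j. complex_of_real (E $$ (i,j))) JR' JC'"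
    using generic_rank_submatrix_eq_card_imp[OF P JR'n JC'N \<open>card JR' = card JC'\<close> gr] by blast
  have E0: "E \<in> carrier_mat n N" using E P by (simp add: realizations_def)
  have E_zero: "complex_of_real (E $$ (i,j)) = 0"
    if "i \<in> JR \<union> JR'" "j \<in> JC \<union> JC'" "\<not> (i \<in> JR' \<and> j \<in> JC')" for i j
  proof -
    have "i < n" "j < N" using that(1,2) JR JR'n JC JC'N by auto
    then show ?thesis using supp that(3) by auto
  qed
  obtain t :: real where t: "block_inj (\<lambda>i j. F $$ (i,j) + of_real t * complex_of_real (E $$ (i,j)))
      (JR \<union> JR') (JC \<union> JC')"
    using block_inj_add_triangular[OF fin disj _ FJ EJ E_zero] rows cols by auto
  define D where "D = t \<cdot>\<^sub>m E"
  have D0: "D \<in> carrier_mat n N" using E0 by (simp add: D_def)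
  have C: "JC \<union> JC' \<subseteq> {0..<N}" using JC JC'N by blast
  have "block_inj (\<lambda>i j. (F + map_mat complex_of_real D) $$ (i,j)) {0..<n} (JC \<union> JC')"
  proof (rule iffD1[OF block_inj_cong t[unfolded rows]])
    fix i j assume "i \<in> {0..<n}" "j \<in> JC \<union> JC'"
    then have "i < n" "j < N" using C by auto
    then show "F $$ (i,j) + of_real t * complex_of_real (E $$ (i,j)) = (F + map_mat complex_of_real D) $$ (i,j)"
      using F E0 by (simp add: D_def)
  qed
  moreover have M: "F + map_mat complex_of_real D \<in> carrier_mat n N" using F D0 by simp
  ultimately have "mrank (F + map_mat complex_of_real D) = n"
    using mrank_eq_dim_row_iff[OF M] C cols by blast
  moreover have "D \<in> realizations P" unfolding D_def by (rule realizations_smult[OF E])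
  ultimately show ?thesis by blast
qed

lemma full_rank_perturbation_iff:
  fixes F :: "complex mat"
  assumes F: "F \<in> carrier_mat n N" and P: "P \<in> carrier_mat n N"
  shows "(\<exists>D \<in> realizations P. mrank (F + map_mat complex_of_real D) = n) \<longleftrightarrow>
    (\<exists>JR JC JR' JC'. JR \<subseteq> {0..<n} \<and> JC \<subseteq> {0..<N} \<and> card JR = card JC \<and>
      JR' \<subseteq> {0..<n} - JR \<and> JC' \<subseteq> {0..<N} - JC \<and> card JR' = n - card JC \<and> card JC' = n - card JC \<and>
      det (submatrix F JR JC) \<noteq> 0 \<and> generic_rank (submatrix P JR' JC') = card JR')"
  using full_rank_perturbation_imp_minors[OF F P] minors_imp_full_rank_perturbation[OF F P] by blast

lemma hcat_in_realizations:
  assumes "dA \<in> realizations PA" and "dB \<in> realizations PB" and "dim_row PB = dim_row PA"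
  shows "hcat dA dB \<in> realizations (hcat PA PB)"
proof -
  have "dim_row dA = dim_row PA" "dim_col dA = dim_col PA" "dim_row dB = dim_row PB" "dim_col dB = dim_col PB"
    using realizationsD[OF assms(1)] realizationsD[OF assms(2)] by simp_all
  then show ?thesis using assms by (simp add: realizations_def hcat_def)
qed

lemma realizations_hcatE:
  assumes D: "D \<in> realizations (hcat PA PB)" and rows: "dim_row PB = dim_row PA"
  obtains dA dB where "dA \<in> realizations PA" "dB \<in> realizations PB" "D = hcat dA dB"
proof
  let ?n = "dim_row PA" and ?k = "dim_col PA" and ?m = "dim_col PB"
  have dims: "dim_row D = ?n" "dim_col D = ?k + ?m"
    using realizationsD(1,2)[OF D] by (simp_all add: hcat_def)
  have zero: "D $$ (i,j) = 0" if "i < ?n" "j < ?k + ?m" "\<not> hcat PA PB $$ (i,j)" for i j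
    using realizationsD(3)[OF D] that by (simp add: hcat_def)
  show "mat ?n ?k (\<lambda>(i,j). D $$ (i,j)) \<in> realizations PA"
  proof (rule realizationsI)
    fix i j assume "i < ?n" "j < ?k" "\<not> PA $$ (i,j)"
    then show "mat ?n ?k (\<lambda>(i,j). D $$ (i,j)) $$ (i,j) = 0" using zero[of i j] by (simp add: hcat_def)
  qed simp_all
  show "mat ?n ?m (\<lambda>(i,j). D $$ (i, j + ?k)) \<in> realizations PB"
  proof (rule realizationsI)
    fix i j assume "i < dim_row PB" "j < ?m" "\<not> PB $$ (i,j)"
    then show "mat ?n ?m (\<lambda>(i,j). D $$ (i, j + ?k)) $$ (i,j) = 0"
      using zero[of i "j + ?k"] rows by (simp add: hcat_def)
  qed (simp_all add: rows)
  show "D = hcat (mat ?n ?k (\<lambda>(i,j). D $$ (i,j))) (mat ?n ?m (\<lambda>(i,j). D $$ (i, j + ?k)))"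
    using dims by (intro eq_matI) (simp_all add: hcat_def)
qed

lemma pencil_hcat_perturbation:
  fixes A B dA dB :: "real mat"
  assumes "A \<in> carrier_mat n n" "B \<in> carrier_mat n m" "dA \<in> carrier_mat n n" "dB \<in> carrier_mat n m"
  shows "hcat (lam \<cdot>\<^sub>m 1\<^sub>m n - map_mat complex_of_real (A + dA)) (map_mat complex_of_real (B + dB)) =
    hcat (lam \<cdot>\<^sub>m 1\<^sub>m n - map_mat complex_of_real A) (map_mat complex_of_real B) +
      map_mat complex_of_real (hcat (- dA) dB)"
  using assms by (intro eq_matI) (auto simp: hcat_def)

lemma pencil_perturbation_ranks:
  fixes A B :: "real mat"
  assumes A: "A \<in> carrier_mat n n" and B: "B \<in> carrier_mat n m"
    and PA: "PA \<in> carrier_mat n n" and PB: "PB \<in> carrier_mat n m"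
  shows "{mrank (hcat (lam \<cdot>\<^sub>m 1\<^sub>m n - map_mat complex_of_real (A + dA)) (map_mat complex_of_real (B + dB))) |
      dA dB. dA \<in> realizations PA \<and> dB \<in> realizations PB} =
    {mrank (hcat (lam \<cdot>\<^sub>m 1\<^sub>m n - map_mat complex_of_real A) (map_mat complex_of_real B) +
      map_mat complex_of_real D) | D. D \<in> realizations (hcat PA PB)}"
  (is "?L = ?R")
proof
  have carrier: "dA \<in> carrier_mat n n" "dB \<in> carrier_mat n m"
    if "dA \<in> realizations PA" "dB \<in> realizations PB" for dA dB
    using realizationsD(1,2)[OF that(1)] realizationsD(1,2)[OF that(2)] carrier_matD[OF PA] carrier_matD[OF PB]
    by (auto intro!: carrier_matI)
  show "?L \<subseteq> ?R"
  proof
    fix r assume "r \<in> ?L"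
    then obtain dA dB where dA: "dA \<in> realizations PA" and dB: "dB \<in> realizations PB"
      and r: "r = mrank (hcat (lam \<cdot>\<^sub>m 1\<^sub>m n - map_mat complex_of_real (A + dA)) (map_mat complex_of_real (B + dB)))"
      by blast
    have "hcat (- dA) dB \<in> realizations (hcat PA PB)"
      using hcat_in_realizations[OF realizations_uminus[OF dA] dB] PA PB by simp
    then show "r \<in> ?R"
      unfolding r pencil_hcat_perturbation[OF A B carrier[OF dA dB]] by blast
  qed
  show "?R \<subseteq> ?L"
  proof
    fix r assume "r \<in> ?R"
    then obtain D where D: "D \<in> realizations (hcat PA PB)"
      and r: "r = mrank (hcat (lam \<cdot>\<^sub>m 1\<^sub>m n - map_mat complex_of_real A) (map_mat complex_of_real B) +
        map_mat complex_of_real D)"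
      by blast
    have "dim_row PB = dim_row PA" using PA PB by simp
    then obtain dA dB where dA: "dA \<in> realizations PA" and dB: "dB \<in> realizations PB"
      and D_eq: "D = hcat (- (- dA)) dB"
      using realizations_hcatE[OF D] uminus_uminus_mat by metis
    have "- dA \<in> realizations PA" using realizations_uminus[OF dA] .
    moreover have "hcat (lam \<cdot>\<^sub>m 1\<^sub>m n - map_mat complex_of_real A) (map_mat complex_of_real B) +
        map_mat complex_of_real D =
      hcat (lam \<cdot>\<^sub>m 1\<^sub>m n - map_mat complex_of_real (A + - dA)) (map_mat complex_of_real (B + dB))"
      unfolding D_eq by (rule pencil_hcat_perturbation[OF A B carrier[OF \<open>- dA \<in> realizations PA\<close> dB], symmetric])
    ultimately show "r \<in> ?L"
      unfolding r mem_Collect_eq using dB by (intro exI[of _ "- dA"] exI[of _ dB]) simp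
  qed
qed

theorem lemma2:
  fixes A :: "real mat" and B :: "real mat" and PA :: "bool mat" and PB :: "bool mat"
    and n m :: nat and lam :: complex
  assumes "A \<in> carrier_mat n n" and "B \<in> carrier_mat n m"
    and "PA \<in> carrier_mat n n" and "PB \<in> carrier_mat n m"
    and "eigenvalue (map_mat complex_of_real A) lam"
  shows "Max {mrank (hcat (lam \<cdot>\<^sub>m 1\<^sub>m n - map_mat complex_of_real (A + dA))
                         (map_mat complex_of_real (B + dB))) | dA dB.
                dA \<in> realizations PA \<and> dB \<in> realizations PB} = n
    \<longleftrightarrow>
    (\<exists>JR JC JR' JC'. JR \<subseteq> {0..<n} \<and> JC \<subseteq> {0..<n+m} \<and> card JR = card JC \<and>
       JR' \<subseteq> {0..<n} - JR \<and> JC' \<subseteq> {0..<n+m} - JC \<and>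
       card JR' = n - card JC \<and> card JC' = n - card JC \<and>
       det (submatrix (hcat (lam \<cdot>\<^sub>m 1\<^sub>m n - map_mat complex_of_real A)
                            (map_mat complex_of_real B)) JR JC) \<noteq> 0 \<and>
       generic_rank (submatrix (hcat PA PB) JR' JC') = card JR')"
proof -
  define F where "F = hcat (lam \<cdot>\<^sub>m 1\<^sub>m n - map_mat complex_of_real A) (map_mat complex_of_real B)"
  have F: "F \<in> carrier_mat n (n + m)" and P: "hcat PA PB \<in> carrier_mat n (n + m)"
    using assms(1-4) by (simp_all add: F_def hcat_def)
  have "0\<^sub>m n (n + m) \<in> realizations (hcat PA PB)" using P by (simp add: realizations_def)
  moreover have "mrank (F + map_mat complex_of_real D) \<le> n" if "D \<in> realizations (hcat PA PB)" for D
    using mrank_le_dim_row[of "F + map_mat complex_of_real D"] realizationsD(1)[OF that] P by simp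
  ultimately have "Max {mrank (F + map_mat complex_of_real D) | D. D \<in> realizations (hcat PA PB)} = n
      \<longleftrightarrow> (\<exists>D \<in> realizations (hcat PA PB). mrank (F + map_mat complex_of_real D) = n)"
    by (subst Max_eq_upper_bound_iff) blast+
  then show ?thesis
    unfolding pencil_perturbation_ranks[OF assms(1-4)] full_rank_perturbation_iff[OF F P]
    by (simp add: F_def)
qed

end
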